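(* For a positive integer $r$ and complex numbers $e_1,\ldots,e_r$, define the rational function $\Phi_{e_1,\ldots,e_r}(x)$ recursively by $\Phi_{e_1}(x)=\frac{1}{e_1-x}$ and $\Phi_{e_1,\ldots,e_r}(x)=\frac{1}{e_r-\Phi_{e_1,\ldots,e_{r-1}}(x)}$ for $r\ge 2$, i.e. $$\Phi_{e_1,\ldots,e_r}(x)=\cfrac{1}{e_r-\cfrac{1}{e_{r-1}-\cfrac{1}{\cdots-\cfrac{1}{e_{2}-\cfrac{1}{e_1-x}}}}}.$$ Let $r$ be a positive integer and let $e_1,\ldots,e_r$ be integers. Suppose that for every permutation $s$ of $\{1,\ldots,r\}$ one has $\Phi_{e_{s(1)},\ldots,e_{s(r)}}(x)=x$ as rational functions. Then $e_1=\cdots=e_r$, and $e_1\in\{-1,0,1\}$. *)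

theory Defs
  imports "HOL-Computational_Algebra.Polynomial" "HOL-Computational_Algebra.Fraction_Field"
          "HOL-Combinatorics.Permutations"
begin

type_synonym ratfun = "complex poly fract"

definition ratfun_X :: ratfun where
  "ratfun_X = Fract [:0, 1:] 1"

definition ratfun_const :: "complex \<Rightarrow> ratfun" where
  "ratfun_const c = Fract [:c:] 1"

text \<open>Phi e r = Phi_{e 1, ..., e r}(x). The value at r = 0 is the seed x, so that
  Phi e 1 = 1/(e 1 - x) and Phi e r = 1/(e r - Phi e (r-1)) for r >= 2.\<close>
fun Phi :: "(nat \<Rightarrow> complex) \<Rightarrow> nat \<Rightarrow> ratfun" where
  "Phi e 0 = ratfun_X"
| "Phi e (Suc r) = 1 / (ratfun_const (e (Suc r)) - Phi e r)"

end

theory Submission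
  imports Defs
begin

text \<open>
  Phi_{e_1,...,e_r} is the Moebius transformation of the integer matrix
  T(e_r) \<cdots> T(e_1) with T(e) = [[0, 1], [-1, e]], which has determinant 1; hence
  Phi_{e_1,...,e_r}(x) = x exactly when this product is a nonzero scalar matrix.
  If two orderings differ by swapping the first two entries e_i, e_j, the products
  are R T(e_j) T(e_i) and R T(e_i) T(e_j) with a common left factor R, and both
  being scalar forces e_i = e_j. For a constant sequence c the product is T(c)^r,
  whose upper right entry is the Chebyshev value U_{r-1}(c/2); for integers with
  |c| \<ge> 2 these values grow strictly in absolute value and so never vanish.
\<close>

datatype 'a mat2 = Mat2 'a 'a 'a 'a

instantiation mat2 :: (comm_ring_1) monoid_mult
begin

fun times_mat2 :: "'a mat2 \<Rightarrow> 'a mat2 \<Rightarrow> 'a mat2" where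
  "Mat2 a b c d * Mat2 a' b' c' d' =
     Mat2 (a * a' + b * c') (a * b' + b * d') (c * a' + d * c') (c * b' + d * d')"

definition one_mat2 :: "'a mat2" where
  "1 = Mat2 1 0 0 1"

instance
proof
  fix A B C :: "'a mat2"
  show "A * B * C = A * (B * C)"
    by (cases A; cases B; cases C) (simp add: algebra_simps)
  show "1 * A = A" "A * 1 = A"
    by (cases A; simp add: one_mat2_def)+
qed

end

fun det2 :: "'a::comm_ring_1 mat2 \<Rightarrow> 'a" where
  "det2 (Mat2 a b c d) = a * d - b * c"

lemma det2_mult: "det2 (A * B) = det2 A * det2 B"
  by (cases A; cases B) (simp add: algebra_simps)

definition cf_mat :: "'a::comm_ring_1 \<Rightarrow> 'a mat2" where
  "cf_mat e = Mat2 0 1 (-1) e"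

fun cf_prod :: "(nat \<Rightarrow> 'a::comm_ring_1) \<Rightarrow> nat \<Rightarrow> 'a mat2" where
  "cf_prod e 0 = 1"
| "cf_prod e (Suc r) = cf_mat (e (Suc r)) * cf_prod e r"

lemma det2_cf_mat [simp]: "det2 (cf_mat e) = 1"
  by (simp add: cf_mat_def)

lemma det2_cf_prod: "det2 (cf_prod e r) = 1"
  by (induction r) (simp_all add: det2_mult one_mat2_def)

lemma cf_prod_add:
  "cf_prod e (n + k) = cf_prod (\<lambda>i. e (i + k)) n * cf_prod e k"
  by (induction n) (simp_all add: mult.assoc)

lemma cf_prod_cong: "(\<And>i. i \<in> {1..r} \<Longrightarrow> e i = e' i) \<Longrightarrow> cf_prod e r = cf_prod e' r"
  by (induction r) auto

fun mobius :: "complex mat2 \<Rightarrow> ratfun" where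
  "mobius (Mat2 a b c d) = Fract [:b, a:] [:d, c:]"

lemma det2_nonzero_imp_denom_nonzero:
  "det2 (Mat2 a b c d) \<noteq> 0 \<Longrightarrow> [:d, c:] \<noteq> 0"
  by auto

lemma mobius_cf_mat_mult:
  assumes "det2 M \<noteq> 0"
  shows "mobius (cf_mat e * M) = 1 / (ratfun_const e - mobius M)"
proof (cases M)
  case (Mat2 a b c d)
  have prod: "cf_mat e * M = Mat2 c d (e * c - a) (e * d - b)"
    by (simp add: Mat2 cf_mat_def)
  have "det2 (cf_mat e * M) \<noteq> 0"
    using assms by (simp add: det2_mult)
  then have "[:e * d - b, e * c - a:] \<noteq> 0"
    unfolding prod by (rule det2_nonzero_imp_denom_nonzero)
  moreover have "[:d, c:] \<noteq> 0"
    using assms Mat2 det2_nonzero_imp_denom_nonzero by blast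
  moreover have "[:e:] * [:d, c:] - [:b, a:] = [:e * d - b, e * c - a:]"
    by simp
  ultimately show ?thesis
    unfolding prod by (simp add: Mat2 ratfun_const_def One_fract_def mult.commute)
qed

lemma Phi_eq_mobius_cf_prod: "Phi e r = mobius (cf_prod e r)"
proof (induction r)
  case 0
  show ?case by (simp add: one_mat2_def ratfun_X_def one_pCons)
next
  case (Suc r)
  then show ?case
    using mobius_cf_mat_mult[of "cf_prod e r"] by (simp add: det2_cf_prod)
qed

lemma mobius_eq_X_imp_scalar:
  assumes "mobius M = ratfun_X" "det2 M \<noteq> 0"
  obtains k where "k \<noteq> 0" "M = Mat2 k 0 0 k"
proof (cases M)
  case (Mat2 a b c d)
  with assms have "Fract [:b, a:] [:d, c:] = Fract [:0, 1:] 1"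
    by (simp add: ratfun_X_def)
  moreover have "[:d, c:] \<noteq> 0"
    using assms det2_nonzero_imp_denom_nonzero Mat2 by blast
  ultimately have "[:b, a:] = [:0, 1:] * [:d, c:]"
    by (simp add: eq_fract)
  then have "b = 0" "c = 0" "a = d"
    by auto
  with assms Mat2 that show ?thesis
    by simp
qed

lemma Phi_eq_X_imp_scalar:
  assumes "Phi e r = ratfun_X"
  obtains k where "k \<noteq> 0" "cf_prod e r = Mat2 k 0 0 k"
  using mobius_eq_X_imp_scalar[of "cf_prod e r"] assms
  by (auto simp: Phi_eq_mobius_cf_prod det2_cf_prod)

lemma scalar_products_swap_eq:
  fixes a b :: "'a::idom"
  assumes "A * (cf_mat a * cf_mat b) = Mat2 k 0 0 k" "k \<noteq> 0"
    and "A * (cf_mat b * cf_mat a) = Mat2 l 0 0 l"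
  shows "a = b"
proof (cases A)
  case (Mat2 p q u v)
  have prod: "A * (cf_mat x * cf_mat y) =
      Mat2 (- p - q * x) (p * y + q * (x * y - 1)) (- u - v * x) (u * y + v * (x * y - 1))" for x y
    by (simp add: Mat2 cf_mat_def algebra_simps)
  from assms(1) have "- u - v * a = 0" "u * b + v * (a * b - 1) = k"
    unfolding prod by simp_all
  moreover from assms(3) have "- u - v * b = 0"
    unfolding prod by simp
  ultimately have "v = - k" "v * a = v * b"
    by algebra+
  with \<open>k \<noteq> 0\<close> show ?thesis
    by simp
qed

lemma cf_prod_first_two:
  "cf_prod e (m + 2) = cf_prod (\<lambda>i. e (i + 2)) m * (cf_mat (e 2) * cf_mat (e 1))"
proof -
  have "cf_prod e 2 = cf_mat (e 2) * cf_mat (e 1)"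
    by (simp add: numeral_2_eq_2)
  then show ?thesis
    by (simp only: cf_prod_add)
qed

lemma Phi_swap_first_two_eq:
  fixes e :: "nat \<Rightarrow> complex"
  assumes "r \<ge> 2" "Phi e r = ratfun_X" "Phi (e \<circ> transpose 1 2) r = ratfun_X"
  shows "e 1 = e 2"
proof -
  define m where "m = r - 2"
  then have r: "r = m + 2"
    using assms(1) by simp
  define R where "R = cf_prod (\<lambda>i. e (i + 2)) m"
  have "cf_prod (\<lambda>i. (e \<circ> transpose 1 2) (i + 2)) m = R"
    unfolding R_def by (rule cf_prod_cong) (simp add: transpose_def)
  then have swapped: "cf_prod (e \<circ> transpose 1 2) r = R * (cf_mat (e 1) * cf_mat (e 2))"
    unfolding r cf_prod_first_two by (simp add: transpose_def)
  have original: "cf_prod e r = R * (cf_mat (e 2) * cf_mat (e 1))"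
    unfolding r cf_prod_first_two R_def ..
  obtain k where "k \<noteq> 0" "cf_prod e r = Mat2 k 0 0 k"
    using Phi_eq_X_imp_scalar assms(2) by blast
  moreover obtain l where "cf_prod (e \<circ> transpose 1 2) r = Mat2 l 0 0 l"
    using Phi_eq_X_imp_scalar assms(3) by blast
  ultimately show ?thesis
    using scalar_products_swap_eq[of R "e 2" "e 1" k l] swapped original by argo
qed

text \<open>Index shift: chebyshev_u c n = U_{n-1}(c/2), with U the Chebyshev polynomials
  of the second kind.\<close>
fun chebyshev_u :: "'a::comm_ring_1 \<Rightarrow> nat \<Rightarrow> 'a" where
  "chebyshev_u c 0 = 0"
| "chebyshev_u c (Suc 0) = 1"
| "chebyshev_u c (Suc (Suc n)) = c * chebyshev_u c (Suc n) - chebyshev_u c n"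

lemma cf_prod_const:
  "cf_prod (\<lambda>_. c) (Suc n) =
     Mat2 (- chebyshev_u c n) (chebyshev_u c (Suc n))
          (- chebyshev_u c (Suc n)) (chebyshev_u c (Suc (Suc n)))"
  by (induction n) (simp_all add: cf_mat_def one_mat2_def algebra_simps)

lemma of_int_chebyshev_u: "chebyshev_u (of_int c) n = of_int (chebyshev_u c n)"
  by (induction c n rule: chebyshev_u.induct) simp_all

lemma abs_chebyshev_u_strict_mono:
  fixes c :: int
  assumes "\<bar>c\<bar> \<ge> 2"
  shows "\<bar>chebyshev_u c n\<bar> < \<bar>chebyshev_u c (Suc n)\<bar>"
proof (induction n)
  case 0
  show ?case by simp
next
  case (Suc n)
  have "2 * \<bar>chebyshev_u c (Suc n)\<bar> \<le> \<bar>c * chebyshev_u c (Suc n)\<bar>"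
    using assms by (simp add: abs_mult mult_right_mono)
  with Suc.IH show ?case
    by simp
qed

lemma Phi_int_const_eq_X_imp_abs_le_1:
  assumes "r \<ge> 1" "Phi (\<lambda>_. of_int c) r = ratfun_X"
  shows "\<bar>c\<bar> \<le> 1"
proof -
  obtain n where r: "r = Suc n"
    using assms(1) by (cases r) auto
  obtain k where "cf_prod (\<lambda>_. of_int c :: complex) (Suc n) = Mat2 k 0 0 k"
    using assms(2) unfolding r by (rule Phi_eq_X_imp_scalar)
  then have "chebyshev_u c (Suc n) = 0"
    unfolding cf_prod_const of_int_chebyshev_u by simp
  then have "\<not> \<bar>c\<bar> \<ge> 2"
    using abs_chebyshev_u_strict_mono[of c n] by auto
  then show ?thesis
    by simp
qed

lemma permutes_map_two_points:
  assumes "a \<in> S" "b \<in> S" "a \<noteq> b" "i \<in> S" "j \<in> S" "i \<noteq> j"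
  obtains s where "s permutes S" "s a = i" "s b = j"
proof
  define k where "k = transpose a i j"
  have "k \<in> S" "k \<noteq> a"
    using assms by (auto simp: k_def transpose_def)
  then show "transpose a i \<circ> transpose b k permutes S"
    using assms by (intro permutes_compose permutes_swap_id)
  show "(transpose a i \<circ> transpose b k) a = i"
    using \<open>k \<noteq> a\<close> assms(3) by (simp add: transpose_def)
  show "(transpose a i \<circ> transpose b k) b = j"
    by (simp add: k_def)
qed

lemma Phi_cong: "(\<And>i. i \<in> {1..r} \<Longrightarrow> e i = e' i) \<Longrightarrow> Phi e r = Phi e' r"
  by (induction r) auto

lemma Phi_perm_invariant_imp_constant:
  fixes f :: "nat \<Rightarrow> complex"
  assumes "\<forall>s. s permutes {1..r} \<longrightarrow> Phi (f \<circ> s) r = ratfun_X" "i \<in> {1..r}" "j \<in> {1..r}"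
  shows "f i = f j"
proof (cases "i = j")
  case False
  then have "2 \<le> r"
    using assms(2,3) by auto
  obtain s where s: "s permutes {1..r}" "s 1 = i" "s 2 = j"
    by (rule permutes_map_two_points[of 1 "{1..r}" 2 i j]) (use assms False \<open>2 \<le> r\<close> in auto)
  have "s \<circ> transpose 1 2 permutes {1..r}"
    using s \<open>2 \<le> r\<close> by (intro permutes_compose permutes_swap_id) auto
  then have "Phi (f \<circ> s \<circ> transpose 1 2) r = ratfun_X"
    using assms(1) by (simp add: comp_assoc)
  moreover have "Phi (f \<circ> s) r = ratfun_X"
    using assms(1) s(1) by simp
  ultimately have "(f \<circ> s) 1 = (f \<circ> s) 2"
    using \<open>2 \<le> r\<close> by (intro Phi_swap_first_two_eq)
  with s show ?thesis
    by simp
qed simp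

theorem lemma2p5:
  fixes r :: nat and e :: "nat \<Rightarrow> int"
  assumes "r \<ge> 1"
    and "\<forall>s. s permutes {1..r} \<longrightarrow>
           Phi (\<lambda>i. of_int (e (s i))) r = ratfun_X"
  shows "(\<forall>i\<in>{1..r}. e i = e 1) \<and> e 1 \<in> {-1, 0, 1}"
proof -
  define f :: "nat \<Rightarrow> complex" where "f i = of_int (e i)" for i
  have inv: "\<forall>s. s permutes {1..r} \<longrightarrow> Phi (f \<circ> s) r = ratfun_X"
    using assms(2) by (simp add: f_def comp_def)
  have const: "\<forall>i\<in>{1..r}. e i = e 1"
  proof
    fix i
    assume "i \<in> {1..r}"
    then have "f i = f 1"
      using assms(1) by (intro Phi_perm_invariant_imp_constant[OF inv]) auto
    then show "e i = e 1"
      by (simp add: f_def)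
  qed
  have "Phi (\<lambda>_. of_int (e 1)) r = Phi f r"
    by (rule Phi_cong) (metis const f_def)
  also have "\<dots> = ratfun_X"
    using inv[rule_format, OF permutes_id] by simp
  finally have "\<bar>e 1\<bar> \<le> 1"
    by (rule Phi_int_const_eq_X_imp_abs_le_1[OF assms(1)])
  then have "e 1 \<in> {-1, 0, 1}"
    by auto
  with const show ?thesis ..
qed

end
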